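(* Under the setting described in the context (conditions (V), (S), (C), compactly supported initial measure $\mu_0$, lattice approximate solution $\mu^N_t$), there is a constant $C$, independent of $l$ and $N$, such that $\|s[\mu^N_{t_l}]\|_{BL^*}\le C$ for all $l$ and $N$.
   Context: $\mathcal{M}^+(\mathbb{R}^k)$: finite nonnegative Borel measures; $\|f\|_{BL}=\max(\sup|f|,\operatorname{Lip}f)$, $\|\mu\|_{BL^*}=\sup\{\int\psi\,d\mu:\|\psi\|_{BL}\le1\}$. Conditions: (V) $V:\mathcal{M}^+(\mathbb{R}^d)\to\mathcal{M}^+(\mathbb{R}^d\times\mathbb{R}^d)$, $\pi_1^{\#}V[\mu]=\mu$; (V1) $\sup_{(x,v)\in\operatorname{supp}V[\mu]}|v|\le C_S(1+\sup_{(x,v)\in\operatorname{supp}V[\mu]}|x|)$; (V2) for each $R'>0$, $\|V[\mu]-V[\nu]\|_{BL^*}\le C_F(R')\|\mu-\nu\|_{BL^*}$ for $\mu,\nu$ supported in $B(0,R')$. (S) $s:\mathcal{M}^+(\mathbb{R}^d)\to\mathcal{M}^+(\mathbb{R}^d)$, (S1) $\|s[\mu]-s[\nu]\|_{BL^*}\le L\|\mu-\nu\|_{BL^*}$, (S2) $\operatorname{supp}s[\mu]\subseteq B(0,R)$ for all $\mu$. (C) $c:\mathbb{R}^d\times\mathcal{M}^+(\mathbb{R}^d)\to\mathbb{R}$, (C1) $|c|\le C_b$, (C2) $|c(x,\mu)-c(y,\nu)|\le C_L(|x-y|+\|\mu-\nu\|_{BL^*})$. Lattice scheme: fix $T>0$;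 $\Delta_N=1/N$; $x_1,\dots,x_I$ enumerate $(N^{-2}\mathbb{Z}^d)\cap[-N,N]^d$, $v_1,\dots,v_J$ enumerate $(N^{-1}\mathbb{Z}^d)\cap[-N,N]^d$; $Q_i=x_i+[0,\Delta_N^2)^d$, $Q'_j=v_j+[0,\Delta_N)^d$; $m_i^x(\mu)=\mu(Q_i)$, $m_{ij}^v(W)=W(Q_i\times Q'_j)$. Time points $t_l=l/N$, $l=0,\dots,M$, with the intervals $[t_l,t_{l+1})$ ($l<M$) and $[t_M,T]$ covering $[0,T]$, each of length at most $\Delta_N$. Set $\mu^N_0=\sum_i m_i^x(\mu_0)\delta_{x_i}$ and for $\tau\in[0,\Delta_N]$: $\mu^N_{t_l+\tau}=\tau\sum_i m_i^x(s[\mu^N_{t_l}])\delta_{x_i}+\sum_{i,j}m_{ij}^v(V[\mu^N_{t_l}])e^{c(x_i,\mu^N_{t_l})\tau}\delta_{x_i+\tau v_j}$. *)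

theory Defs
  imports "HOL-Analysis.Analysis"
begin

definition fin_borel_measures :: "'a::topological_space measure set" where
  "fin_borel_measures = {M. sets M = sets borel \<and> emeasure M UNIV < \<infinity>}"

definition bl_ball :: "('a::metric_space \<Rightarrow> real) set" where
  "bl_ball = {\<psi>. (\<forall>x. \<bar>\<psi> x\<bar> \<le> 1) \<and> 1-lipschitz_on UNIV \<psi>}"

definition bl_norm :: "'a::metric_space measure \<Rightarrow> real" where
  "bl_norm \<mu> = Sup {(\<integral>x. \<psi> x \<partial>\<mu>) | \<psi>. \<psi> \<in> bl_ball}"

definition bl_dist :: "'a::metric_space measure \<Rightarrow> 'a measure \<Rightarrow> real" where
  "bl_dist \<mu> \<nu> = Sup {(\<integral>x. \<psi> x \<partial>\<mu>) - (\<integral>x. \<psi> x \<partial>\<nu>) | \<psi>. \<psi> \<in> bl_ball}"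

definition msupp :: "'a::metric_space measure \<Rightarrow> 'a set" where
  "msupp M = {x. \<forall>e>0. emeasure M (ball x e) \<noteq> 0}"

definition Xlat :: "nat \<Rightarrow> (real^'d) set" where
  "Xlat N = {x. \<forall>k. x$k * (real N)^2 \<in> \<int> \<and> \<bar>x$k\<bar> \<le> real N}"

definition Vlat :: "nat \<Rightarrow> (real^'d) set" where
  "Vlat N = {v. \<forall>k. v$k * real N \<in> \<int> \<and> \<bar>v$k\<bar> \<le> real N}"

definition cubeX :: "nat \<Rightarrow> real^'d \<Rightarrow> (real^'d) set" where
  "cubeX N x = {y. \<forall>k. x$k \<le> y$k \<and> y$k < x$k + 1 / (real N)^2}"

definition cubeV :: "nat \<Rightarrow> real^'d \<Rightarrow> (real^'d) set" where
  "cubeV N v = {w. \<forall>k. v$k \<le> w$k \<and> w$k < v$k + 1 / real N}"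

definition lat_init :: "nat \<Rightarrow> (real^'d) measure \<Rightarrow> (real^'d) measure" where
  "lat_init N \<mu> = measure_of UNIV (sets borel)
     (\<lambda>A. ennreal (\<Sum>x\<in>Xlat N. measure \<mu> (cubeX N x) * indicator A x))"

definition lat_step ::
  "((real^'d) measure \<Rightarrow> (real^'d) measure) \<Rightarrow>
   ((real^'d) measure \<Rightarrow> ((real^'d) \<times> (real^'d)) measure) \<Rightarrow>
   (real^'d \<Rightarrow> (real^'d) measure \<Rightarrow> real) \<Rightarrow> nat \<Rightarrow>
   (real^'d) measure \<Rightarrow> real \<Rightarrow> (real^'d) measure" where
  "lat_step s V c N \<mu> \<tau> = measure_of UNIV (sets borel)
     (\<lambda>A. ennreal (\<tau> * (\<Sum>x\<in>Xlat N. measure (s \<mu>) (cubeX N x) * indicator A x)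
        + (\<Sum>(x, v)\<in>Xlat N \<times> Vlat N.
             measure (V \<mu>) (cubeX N x \<times> cubeV N v) * exp (c x \<mu> * \<tau>)
               * indicator A (x + \<tau> *\<^sub>R v))))"

text \<open>mu_lat s V c mu0 N l = mu^N_{t_l}, with t_l = l/N and step length Delta_N = 1/N.\<close>
primrec mu_lat ::
  "((real^'d) measure \<Rightarrow> (real^'d) measure) \<Rightarrow>
   ((real^'d) measure \<Rightarrow> ((real^'d) \<times> (real^'d)) measure) \<Rightarrow>
   (real^'d \<Rightarrow> (real^'d) measure \<Rightarrow> real) \<Rightarrow>
   (real^'d) measure \<Rightarrow> nat \<Rightarrow> nat \<Rightarrow> (real^'d) measure" where
  "mu_lat s V c \<mu>0 N 0 = lat_init N \<mu>0"
| "mu_lat s V c \<mu>0 N (Suc l) = lat_step s V c N (mu_lat s V c \<mu>0 N l) (1 / real N)"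

end

theory Submission
  imports Defs
begin

text \<open>Testing with \<open>\<psi> = 1\<close> shows that the BL-norm of a nonnegative measure dominates its
  total mass, while \<open>\<parallel>s[\<mu>]\<parallel> \<le> \<parallel>s[\<mu>] - s[\<mu>\<^sub>0]\<parallel> + |s[\<mu>\<^sub>0]|\<close> and (S1) give
  \<open>\<parallel>s[\<mu>]\<parallel> \<le> |L| (|\<mu>| + |\<mu>\<^sub>0|) + |s[\<mu>\<^sub>0]|\<close>, a bound affine in the mass \<open>|\<mu>|\<close>.
  Since the lattice cells are disjoint and \<open>V[\<mu>]\<close> has the mass of \<open>\<mu>\<close>, one step of length \<open>\<Delta>\<close>
  turns mass \<open>|\<mu>|\<close> into at most \<open>\<Delta> |s[\<mu>]| + e\<^bsup>C\<^sub>b \<Delta>\<^esup> |\<mu>|\<close>, so a discrete Gronwall inequality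
  bounds the mass of \<open>\<mu>\<^sup>N\<close>, and with it \<open>\<parallel>s[\<mu>\<^sup>N]\<parallel>\<close>, at all times \<open>t\<^sub>l \<le> T\<close>.
  Only (S1), (C1) and the marginal condition of (V) are needed.\<close>

abbreviation total_mass :: "'a measure \<Rightarrow> real" where
  "total_mass M \<equiv> measure M UNIV"

lemma fin_borel_measures_space: "M \<in> fin_borel_measures \<Longrightarrow> space M = UNIV"
  using sets_eq_imp_space_eq[of M borel] by (simp add: fin_borel_measures_def)

lemma finite_measure_fin_borel_measures: "M \<in> fin_borel_measures \<Longrightarrow> finite_measure M"
  using fin_borel_measures_space[of M]
  by (intro finite_measureI) (auto simp: fin_borel_measures_def)

lemma sum_measure_disjoint_le_total_mass:
  assumes M: "M \<in> fin_borel_measures" and A: "\<And>i. i \<in> I \<Longrightarrow> A i \<in> sets borel"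
    and disj: "disjoint_family_on A I"
  shows "(\<Sum>i\<in>I. measure M (A i)) \<le> total_mass M"
proof (cases "finite I")
  case True
  interpret finite_measure M using M by (rule finite_measure_fin_borel_measures)
  have "(\<Sum>i\<in>I. measure M (A i)) = measure M (\<Union>i\<in>I. A i)"
    using True A disj M
    by (intro finite_measure_finite_Union[symmetric]) (auto simp: fin_borel_measures_def)
  also have "\<dots> \<le> measure M (space M)" by (rule bounded_measure)
  finally show ?thesis using fin_borel_measures_space[OF M] by simp
qed simp

lemma total_mass_distr_fst:
  fixes W :: "('a::second_countable_topology \<times> 'b::second_countable_topology) measure"
  assumes W: "W \<in> fin_borel_measures"
  shows "total_mass (distr W borel fst) = total_mass W"
proof -
  have "fst \<in> borel_measurable (borel :: ('a \<times> 'b) measure)"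
    by (intro borel_measurable_continuous_onI continuous_intros)
  moreover have "sets W = sets borel" using W by (simp add: fin_borel_measures_def)
  ultimately have "fst \<in> measurable W borel" by (simp cong: measurable_cong_sets)
  then show ?thesis using measure_distr[of fst W borel UNIV] fin_borel_measures_space[OF W] by simp
qed

lemma bl_ball_const: "\<bar>a\<bar> \<le> 1 \<Longrightarrow> (\<lambda>_. a) \<in> bl_ball"
  by (auto simp: bl_ball_def intro: lipschitz_on_le[OF lipschitz_on_constant])

lemma bl_ball_borel_measurable:
  assumes "\<psi> \<in> bl_ball" "M \<in> fin_borel_measures"
  shows "\<psi> \<in> borel_measurable M"
proof -
  have "continuous_on UNIV \<psi>"
    using assms(1) lipschitz_on_continuous_on by (auto simp: bl_ball_def)
  then have "\<psi> \<in> borel_measurable borel" by (rule borel_measurable_continuous_onI)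
  moreover have "sets M = sets borel" using assms(2) by (simp add: fin_borel_measures_def)
  ultimately show ?thesis by (simp cong: measurable_cong_sets)
qed

lemma abs_integral_bl_ball_le:
  assumes \<psi>: "\<psi> \<in> bl_ball" and M: "M \<in> fin_borel_measures"
  shows "\<bar>\<integral>x. \<psi> x \<partial>M\<bar> \<le> total_mass M"
proof -
  interpret finite_measure M using M by (rule finite_measure_fin_borel_measures)
  have bounded: "\<And>x. \<bar>\<psi> x\<bar> \<le> 1" using \<psi> by (simp add: bl_ball_def)
  have "integrable M \<psi>"
    using bounded bl_ball_borel_measurable[OF \<psi> M] by (intro integrable_const_bound[where B=1]) auto
  then have "\<bar>\<integral>x. \<psi> x \<partial>M\<bar> \<le> (\<integral>x. 1 \<partial>M)"
    using bounded by (intro order_trans[OF integral_abs_bound] integral_mono) auto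
  then show ?thesis using fin_borel_measures_space[OF M] by simp
qed

lemma bdd_above_bl_dist_set:
  assumes "M \<in> fin_borel_measures" "N \<in> fin_borel_measures"
  shows "bdd_above {(\<integral>x. \<psi> x \<partial>M) - (\<integral>x. \<psi> x \<partial>N) | \<psi>. \<psi> \<in> bl_ball}"
  using abs_integral_bl_ball_le[OF _ assms(1)] abs_integral_bl_ball_le[OF _ assms(2)]
  by (intro bdd_aboveI[where M = "total_mass M + total_mass N"]) fastforce

lemma bl_dist_nonneg:
  assumes "M \<in> fin_borel_measures" "N \<in> fin_borel_measures"
  shows "0 \<le> bl_dist M N"
proof -
  have "0 \<in> {(\<integral>x. \<psi> x \<partial>M) - (\<integral>x. \<psi> x \<partial>N) | \<psi>. \<psi> \<in> bl_ball}"
    using bl_ball_const[of 0] by force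
  then show ?thesis
    unfolding bl_dist_def by (rule cSup_upper2[OF _ order_refl bdd_above_bl_dist_set[OF assms]])
qed

lemma bl_dist_le_total_mass:
  assumes "M \<in> fin_borel_measures" "N \<in> fin_borel_measures"
  shows "bl_dist M N \<le> total_mass M + total_mass N"
  unfolding bl_dist_def
proof (rule cSup_least)
  show "{(\<integral>x. \<psi> x \<partial>M) - (\<integral>x. \<psi> x \<partial>N) | \<psi>. \<psi> \<in> bl_ball} \<noteq> {}"
    using bl_ball_const[of 0, simplified] by blast
  fix y assume "y \<in> {(\<integral>x. \<psi> x \<partial>M) - (\<integral>x. \<psi> x \<partial>N) | \<psi>. \<psi> \<in> bl_ball}"
  then obtain \<psi> where \<psi>: "\<psi> \<in> bl_ball" and y: "y = (\<integral>x. \<psi> x \<partial>M) - (\<integral>x. \<psi> x \<partial>N)"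
    by blast
  show "y \<le> total_mass M + total_mass N"
    using abs_integral_bl_ball_le[OF \<psi> assms(1)] abs_integral_bl_ball_le[OF \<psi> assms(2)] y
    by linarith
qed

lemma bl_norm_le_bl_dist_add_total_mass:
  assumes "M \<in> fin_borel_measures" "N \<in> fin_borel_measures"
  shows "bl_norm M \<le> bl_dist M N + total_mass N"
  unfolding bl_norm_def
proof (rule cSup_least)
  show "{\<integral>x. \<psi> x \<partial>M | \<psi>. \<psi> \<in> bl_ball} \<noteq> {}" using bl_ball_const[of 0, simplified] by blast
  fix y assume "y \<in> {\<integral>x. \<psi> x \<partial>M | \<psi>. \<psi> \<in> bl_ball}"
  then obtain \<psi> where \<psi>: "\<psi> \<in> bl_ball" and y: "y = (\<integral>x. \<psi> x \<partial>M)" by blast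
  have "(\<integral>x. \<psi> x \<partial>M) - (\<integral>x. \<psi> x \<partial>N) \<le> bl_dist M N"
    unfolding bl_dist_def using \<psi> by (intro cSup_upper[OF _ bdd_above_bl_dist_set[OF assms]]) blast
  moreover have "(\<integral>x. \<psi> x \<partial>N) \<le> total_mass N"
    using abs_integral_bl_ball_le[OF \<psi> assms(2)] by linarith
  ultimately show "y \<le> bl_dist M N + total_mass N" using y by linarith
qed

lemma total_mass_le_bl_norm:
  assumes M: "M \<in> fin_borel_measures"
  shows "total_mass M \<le> bl_norm M"
proof -
  have "bdd_above {\<integral>x. \<psi> x \<partial>M | \<psi>. \<psi> \<in> bl_ball}"
    using abs_integral_bl_ball_le[OF _ M] by (intro bdd_aboveI[where M = "total_mass M"]) fastforce
  moreover have "(\<integral>x. 1 \<partial>M) \<in> {\<integral>x. \<psi> x \<partial>M | \<psi>. \<psi> \<in> bl_ball}"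
    using bl_ball_const[of 1, simplified] by blast
  ultimately have "(\<integral>x. 1 \<partial>M) \<le> bl_norm M" unfolding bl_norm_def by (rule cSup_upper[rotated])
  then show ?thesis using fin_borel_measures_space[OF M] by simp
qed

lemma bl_norm_le_of_bl_dist_le:
  assumes M: "M \<in> fin_borel_measures" and M0: "M0 \<in> fin_borel_measures"
    and A: "A \<in> fin_borel_measures" and A0: "A0 \<in> fin_borel_measures"
    and lip: "bl_dist A A0 \<le> L * bl_dist M M0"
  shows "bl_norm A \<le> \<bar>L\<bar> * (total_mass M + total_mass M0) + total_mass A0"
proof -
  have "bl_norm A \<le> bl_dist A A0 + total_mass A0"
    by (rule bl_norm_le_bl_dist_add_total_mass[OF A A0])
  also have "bl_dist A A0 \<le> \<bar>L\<bar> * bl_dist M M0"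
    using lip mult_right_mono[OF abs_ge_self bl_dist_nonneg[OF M M0]] by (rule order_trans)
  also have "\<dots> \<le> \<bar>L\<bar> * (total_mass M + total_mass M0)"
    using bl_dist_le_total_mass[OF M M0] by (intro mult_left_mono) auto
  finally show ?thesis by simp
qed

lemma cubeX_borel: "cubeX N x \<in> sets borel"
proof -
  have "cubeX N x = {y. \<forall>k\<in>UNIV. x$k \<le> y$k \<and> y$k < x$k + 1 / (real N)^2}"
    by (simp add: cubeX_def)
  also have "\<dots> \<in> sets borel" by measurable
  finally show ?thesis .
qed

lemma cubeV_borel: "cubeV N v \<in> sets borel"
proof -
  have "cubeV N v = {y. \<forall>k\<in>UNIV. v$k \<le> y$k \<and> y$k < v$k + 1 / real N}"
    by (simp add: cubeV_def)
  also have "\<dots> \<in> sets borel" by measurable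
  finally show ?thesis .
qed

lemma cubeX_times_cubeV_borel:
  "cubeX N x \<times> cubeV N v \<in> sets (borel :: ((real^'d) \<times> (real^'d)) measure)"
  using pair_measureI[OF cubeX_borel cubeV_borel] by (simp only: borel_prod)

lemma grid_cells_eq:
  fixes a b z q :: real
  assumes "0 \<le> q" "a * q \<in> \<int>" "b * q \<in> \<int>"
    and "a \<le> z" "z < a + 1 / q" "b \<le> z" "z < b + 1 / q"
  shows "a = b"
proof -
  have q: "q > 0" using assms by (cases "q = 0") auto
  have "\<bar>a - b\<bar> * q < 1 / q * q"
    using assms q by (intro mult_strict_right_mono) auto
  then have "\<bar>a * q - b * q\<bar> < 1"
    using q by (simp add: abs_mult flip: left_diff_distrib)
  then show ?thesis
    using Ints_eq_abs_less1[OF assms(2,3)] q by simp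
qed

lemma disjoint_family_on_cubeX: "disjoint_family_on (cubeX N) (Xlat N)"
proof (unfold disjoint_family_on_def, intro ballI impI equals0I)
  fix x y z assume xy: "x \<in> Xlat N" "y \<in> Xlat N" "x \<noteq> y"
    and z: "z \<in> cubeX N x \<inter> cubeX N y"
  obtain k where k: "x$k \<noteq> y$k" using xy(3) by (metis vec_eq_iff)
  from z have "x$k = y$k"
    using xy by (intro grid_cells_eq[where q = "(real N)^2" and z = "z$k"])
      (auto simp: Xlat_def cubeX_def)
  with k show False ..
qed

lemma disjoint_family_on_cubeV: "disjoint_family_on (cubeV N) (Vlat N)"
proof (unfold disjoint_family_on_def, intro ballI impI equals0I)
  fix v w z assume vw: "v \<in> Vlat N" "w \<in> Vlat N" "v \<noteq> w"
    and z: "z \<in> cubeV N v \<inter> cubeV N w"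
  obtain k where k: "v$k \<noteq> w$k" using vw(3) by (metis vec_eq_iff)
  from z have "v$k = w$k"
    using vw by (intro grid_cells_eq[where q = "real N" and z = "z$k"])
      (auto simp: Vlat_def cubeV_def)
  with k show False ..
qed

lemma sum_cubeX_le_total_mass:
  "M \<in> fin_borel_measures \<Longrightarrow> (\<Sum>x\<in>Xlat N. measure M (cubeX N x)) \<le> total_mass M"
  by (rule sum_measure_disjoint_le_total_mass) (auto simp: cubeX_borel disjoint_family_on_cubeX)

lemma sum_cubeX_times_cubeV_le_total_mass:
  fixes M :: "((real^'d) \<times> (real^'d)) measure"
  assumes M: "M \<in> fin_borel_measures"
  shows "(\<Sum>(x, v)\<in>Xlat N \<times> Vlat N. measure M (cubeX N x \<times> cubeV N v)) \<le> total_mass M"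
proof -
  have "disjoint_family_on (\<lambda>(x, v). cubeX N x \<times> cubeV N v) (Xlat N \<times> Vlat N)"
    using disjoint_family_on_cubeX[of N] disjoint_family_on_cubeV[of N]
    by (fastforce simp: disjoint_family_on_def)
  with M show ?thesis
    unfolding case_prod_beta
    by (intro sum_measure_disjoint_le_total_mass) (auto simp: cubeX_times_cubeV_borel)
qed

text \<open>No countable additivity of \<open>f\<close> is needed: without it \<open>measure_of\<close> yields the null measure.\<close>
lemma fin_borel_measures_measure_of:
  assumes f: "f UNIV = ennreal r" and r: "0 \<le> r"
  shows "measure_of UNIV (sets borel) f \<in> fin_borel_measures"
    and "total_mass (measure_of UNIV (sets borel) f) \<le> r"
proof -
  let ?M = "measure_of UNIV (sets borel) f"
  have sigma: "sigma_sets UNIV (sets borel) = sets (borel :: 'a measure)"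
    using sets.sigma_sets_eq[of borel] by simp
  have mass: "emeasure ?M UNIV \<le> ennreal r"
    using f by (simp add: emeasure_measure_of_conv sigma)
  then show "?M \<in> fin_borel_measures"
    by (auto simp: fin_borel_measures_def sets_measure_of_conv sigma intro: le_less_trans)
  show "total_mass ?M \<le> r"
    using enn2real_mono[OF mass] r by (simp add: measure_def)
qed

lemma lat_init_fin_borel_measures: "lat_init N \<mu> \<in> fin_borel_measures"
  unfolding lat_init_def by (rule fin_borel_measures_measure_of(1)) (auto intro: sum_nonneg)

lemma total_mass_lat_init_le:
  assumes "\<mu> \<in> fin_borel_measures"
  shows "total_mass (lat_init N \<mu>) \<le> total_mass \<mu>"
proof -
  have "total_mass (lat_init N \<mu>) \<le> (\<Sum>x\<in>Xlat N. measure \<mu> (cubeX N x))"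
    unfolding lat_init_def by (rule fin_borel_measures_measure_of(2)) (auto intro: sum_nonneg)
  also have "\<dots> \<le> total_mass \<mu>" by (rule sum_cubeX_le_total_mass[OF assms])
  finally show ?thesis .
qed

lemma lat_step_fin_borel_measures:
  assumes "0 \<le> \<tau>"
  shows "lat_step s V c N \<mu> \<tau> \<in> fin_borel_measures"
    and "total_mass (lat_step s V c N \<mu> \<tau>)
           \<le> \<tau> * (\<Sum>x\<in>Xlat N. measure (s \<mu>) (cubeX N x))
             + (\<Sum>(x, v)\<in>Xlat N \<times> Vlat N.
                  measure (V \<mu>) (cubeX N x \<times> cubeV N v) * exp (c x \<mu> * \<tau>))"
    (is "_ \<le> ?r")
proof -
  have "0 \<le> ?r" using assms by (auto intro!: sum_nonneg add_nonneg_nonneg mult_nonneg_nonneg)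
  then show "lat_step s V c N \<mu> \<tau> \<in> fin_borel_measures" "total_mass (lat_step s V c N \<mu> \<tau>) \<le> ?r"
    unfolding lat_step_def by (intro fin_borel_measures_measure_of[where r = ?r]; simp)+
qed

lemma total_mass_lat_step_le:
  assumes \<tau>: "0 \<le> \<tau>" and s\<mu>: "s \<mu> \<in> fin_borel_measures" and V\<mu>: "V \<mu> \<in> fin_borel_measures"
    and marg: "distr (V \<mu>) borel fst = \<mu>" and c: "\<And>x. \<bar>c x \<mu>\<bar> \<le> C\<^sub>b"
  shows "total_mass (lat_step s V c N \<mu> \<tau>)
           \<le> \<tau> * total_mass (s \<mu>) + exp (C\<^sub>b * \<tau>) * total_mass \<mu>"
proof -
  note lat_step_fin_borel_measures(2)[OF \<tau>, where s = s and V = V and c = c and N = N and \<mu> = \<mu>]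
  also have "\<tau> * (\<Sum>x\<in>Xlat N. measure (s \<mu>) (cubeX N x)) \<le> \<tau> * total_mass (s \<mu>)"
    using \<tau> sum_cubeX_le_total_mass[OF s\<mu>] by (rule mult_left_mono[rotated])
  also have "(\<Sum>(x, v)\<in>Xlat N \<times> Vlat N.
               measure (V \<mu>) (cubeX N x \<times> cubeV N v) * exp (c x \<mu> * \<tau>))
      \<le> (\<Sum>(x, v)\<in>Xlat N \<times> Vlat N. measure (V \<mu>) (cubeX N x \<times> cubeV N v) * exp (C\<^sub>b * \<tau>))"
    using c[THEN abs_le_D1] \<tau> by (intro sum_mono) (auto intro!: mult_left_mono mult_right_mono)
  also have "\<dots> = exp (C\<^sub>b * \<tau>) * (\<Sum>(x, v)\<in>Xlat N \<times> Vlat N. measure (V \<mu>) (cubeX N x \<times> cubeV N v))"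
    by (simp add: sum_distrib_left case_prod_beta mult.commute)
  also have "\<dots> \<le> exp (C\<^sub>b * \<tau>) * total_mass (V \<mu>)"
    using sum_cubeX_times_cubeV_le_total_mass[OF V\<mu>] by (intro mult_left_mono) auto
  also have "total_mass (V \<mu>) = total_mass \<mu>"
    using total_mass_distr_fst[OF V\<mu>] marg by simp
  finally show ?thesis by simp
qed

lemma mu_lat_fin_borel_measures: "mu_lat s V c \<mu>0 N l \<in> fin_borel_measures"
  by (cases l) (simp_all add: lat_init_fin_borel_measures lat_step_fin_borel_measures)

lemma exp_add_le_exp_add:
  fixes x y :: real
  assumes "0 \<le> x" "0 \<le> y"
  shows "exp x + y \<le> exp (x + y)"
proof -
  have "exp x + y \<le> exp x * (1 + y)"
    using assms by (simp add: distrib_left mult_le_cancel_right1)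
  also have "\<dots> \<le> exp x * exp y" by (intro mult_left_mono) auto
  finally show ?thesis by (simp add: exp_add)
qed

lemma discrete_gronwall:
  fixes u :: "nat \<Rightarrow> real"
  assumes step: "\<And>l. u (Suc l) \<le> exp b * u l + k" and "0 \<le> b" "0 \<le> k"
  shows "u l \<le> exp (b * real l) * (u 0 + real l * k)"
proof (induction l)
  case (Suc l)
  have exp_Suc: "exp b * exp (b * real l) = exp (b * real (Suc l))"
    by (simp add: algebra_simps flip: exp_add)
  have "u (Suc l) \<le> exp b * (exp (b * real l) * (u 0 + real l * k)) + k"
    using step[of l] mult_left_mono[OF Suc.IH exp_ge_zero[of b]] by linarith
  also have "\<dots> \<le> exp b * (exp (b * real l) * (u 0 + real l * k)) + exp (b * real (Suc l)) * k"
    using assms by (simp add: mult_le_cancel_right1)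
  also have "\<dots> = exp (b * real (Suc l)) * (u 0 + real (Suc l) * k)"
    unfolding exp_Suc[symmetric] by (simp add: algebra_simps)
  finally show ?case .
qed simp

lemma total_mass_mu_lat_le:
  assumes S_meas: "\<And>\<mu>. \<mu> \<in> fin_borel_measures \<Longrightarrow> s \<mu> \<in> fin_borel_measures"
    and V_meas: "\<And>\<mu>. \<mu> \<in> fin_borel_measures \<Longrightarrow> V \<mu> \<in> fin_borel_measures"
    and V_marg: "\<And>\<mu>. \<mu> \<in> fin_borel_measures \<Longrightarrow> distr (V \<mu>) borel fst = \<mu>"
    and c: "\<And>x \<mu>. \<mu> \<in> fin_borel_measures \<Longrightarrow> \<bar>c x \<mu>\<bar> \<le> C\<^sub>b"
    and s_mass: "\<And>\<mu>. \<mu> \<in> fin_borel_measures \<Longrightarrow> total_mass (s \<mu>) \<le> A * total_mass \<mu> + K"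
    and A: "0 \<le> A" and K: "0 \<le> K" and \<mu>0: "\<mu>0 \<in> fin_borel_measures"
  shows "total_mass (mu_lat s V c \<mu>0 N l)
           \<le> exp ((C\<^sub>b + A) * real l / real N) * (total_mass \<mu>0 + K * real l / real N)"
proof -
  define h where "h = 1 / real N"
  define u where "u l = total_mass (mu_lat s V c \<mu>0 N l)" for l
  have C\<^sub>b: "0 \<le> C\<^sub>b" using c[OF \<mu>0, of 0] by linarith
  have h: "0 \<le> h" by (simp add: h_def)
  have "u (Suc l) \<le> exp ((C\<^sub>b + A) * h) * u l + h * K" for l
  proof -
    let ?M = "mu_lat s V c \<mu>0 N l"
    have M: "?M \<in> fin_borel_measures" by (rule mu_lat_fin_borel_measures)
    have cM: "\<bar>c x ?M\<bar> \<le> C\<^sub>b" for x by (rule c[OF M])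
    have "u (Suc l) = total_mass (lat_step s V c N ?M h)" by (simp add: u_def h_def)
    also have "\<dots> \<le> h * total_mass (s ?M) + exp (C\<^sub>b * h) * u l"
      unfolding u_def
      by (rule total_mass_lat_step_le[where s = s and V = V and c = c and \<mu> = ?M,
            OF h S_meas[OF M] V_meas[OF M] V_marg[OF M] cM])
    also have "\<dots> \<le> h * (A * u l + K) + exp (C\<^sub>b * h) * u l"
      using s_mass[OF M] h by (simp add: u_def mult_left_mono)
    also have "\<dots> = (exp (C\<^sub>b * h) + A * h) * u l + h * K"
      by (simp add: algebra_simps)
    also have "\<dots> \<le> exp (C\<^sub>b * h + A * h) * u l + h * K"
      using exp_add_le_exp_add[of "C\<^sub>b * h" "A * h"] C\<^sub>b A h
      by (simp add: u_def mult_right_mono)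
    finally show ?thesis by (simp add: algebra_simps)
  qed
  then have "u l \<le> exp ((C\<^sub>b + A) * h * real l) * (u 0 + real l * (h * K))"
    using C\<^sub>b A K h by (intro discrete_gronwall) auto
  also have "u 0 \<le> total_mass \<mu>0"
    unfolding u_def using total_mass_lat_init_le[OF \<mu>0] by simp
  finally show ?thesis
    by (simp add: u_def h_def mult.commute mult.left_commute)
qed

theorem corollary4p7:
  fixes V :: "(real^'d) measure \<Rightarrow> ((real^'d) \<times> (real^'d)) measure"
    and s :: "(real^'d) measure \<Rightarrow> (real^'d) measure"
    and c :: "real^'d \<Rightarrow> (real^'d) measure \<Rightarrow> real"
    and \<mu>0 :: "(real^'d) measure"
    and T :: real
  assumes T: "T > 0"
    (* (V) *)
    and V_meas: "\<And>\<mu>. \<mu> \<in> fin_borel_measures \<Longrightarrow> V \<mu> \<in> fin_borel_measures"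
    and V_marg: "\<And>\<mu>. \<mu> \<in> fin_borel_measures \<Longrightarrow> distr (V \<mu>) borel fst = \<mu>"
    (* (V1) *)
    and V1: "\<exists>C_S>0. \<forall>\<mu>\<in>fin_borel_measures.
               (SUP p\<in>msupp (V \<mu>). ereal (norm (snd p)))
                 \<le> ereal C_S * (1 + (SUP p\<in>msupp (V \<mu>). ereal (norm (fst p))))"
    (* (V2) *)
    and V2: "\<forall>R'>0. \<exists>C_F. \<forall>\<mu>\<in>fin_borel_measures. \<forall>\<nu>\<in>fin_borel_measures.
               msupp \<mu> \<subseteq> ball 0 R' \<longrightarrow> msupp \<nu> \<subseteq> ball 0 R' \<longrightarrow>
               bl_dist (V \<mu>) (V \<nu>) \<le> C_F * bl_dist \<mu> \<nu>"
    (* (S) *)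
    and S_meas: "\<And>\<mu>. \<mu> \<in> fin_borel_measures \<Longrightarrow> s \<mu> \<in> fin_borel_measures"
    and S1: "\<exists>L. \<forall>\<mu>\<in>fin_borel_measures. \<forall>\<nu>\<in>fin_borel_measures.
               bl_dist (s \<mu>) (s \<nu>) \<le> L * bl_dist \<mu> \<nu>"
    and S2: "\<exists>R. \<forall>\<mu>\<in>fin_borel_measures. msupp (s \<mu>) \<subseteq> ball 0 R"
    (* (C) *)
    and C1: "\<exists>C_b. \<forall>x. \<forall>\<mu>\<in>fin_borel_measures. \<bar>c x \<mu>\<bar> \<le> C_b"
    and C2: "\<exists>C_L. \<forall>x y. \<forall>\<mu>\<in>fin_borel_measures. \<forall>\<nu>\<in>fin_borel_measures.
               \<bar>c x \<mu> - c y \<nu>\<bar> \<le> C_L * (dist x y + bl_dist \<mu> \<nu>)"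
    (* initial datum *)
    and mu0: "\<mu>0 \<in> fin_borel_measures"
    and mu0_cpt: "compact (msupp \<mu>0)"
  shows "\<exists>C. \<forall>N::nat. \<forall>l::nat. N \<ge> 1 \<longrightarrow> real l \<le> T * real N \<longrightarrow>
           bl_norm (s (mu_lat s V c \<mu>0 N l)) \<le> C"
proof -
  obtain L where L: "\<And>\<mu> \<nu>. \<mu> \<in> fin_borel_measures \<Longrightarrow> \<nu> \<in> fin_borel_measures \<Longrightarrow>
      bl_dist (s \<mu>) (s \<nu>) \<le> L * bl_dist \<mu> \<nu>" using S1 by blast
  obtain C\<^sub>b where C\<^sub>b: "\<And>x \<mu>. \<mu> \<in> fin_borel_measures \<Longrightarrow> \<bar>c x \<mu>\<bar> \<le> C\<^sub>b" using C1 by blast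
  define K where "K = \<bar>L\<bar> * total_mass \<mu>0 + total_mass (s \<mu>0)"
  have s_norm: "bl_norm (s \<mu>) \<le> \<bar>L\<bar> * total_mass \<mu> + K" if "\<mu> \<in> fin_borel_measures" for \<mu>
    using bl_norm_le_of_bl_dist_le[OF that mu0 S_meas[OF that] S_meas[OF mu0] L[OF that mu0]]
    by (simp add: K_def algebra_simps)
  have s_mass: "total_mass (s \<mu>) \<le> \<bar>L\<bar> * total_mass \<mu> + K" if "\<mu> \<in> fin_borel_measures" for \<mu>
    using total_mass_le_bl_norm[OF S_meas[OF that]] s_norm[OF that] by linarith
  have K: "0 \<le> K" by (simp add: K_def)
  define a where "a = C\<^sub>b + \<bar>L\<bar>"
  have a: "0 \<le> a" using C\<^sub>b[OF mu0, of 0] by (simp add: a_def)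
  show ?thesis
  proof (intro exI[of _ "\<bar>L\<bar> * (exp (a * T) * (total_mass \<mu>0 + K * T)) + K"] allI impI)
    fix N l :: nat assume "1 \<le> N" "real l \<le> T * real N"
    then have t: "real l / real N \<le> T" by (simp add: divide_le_eq mult.commute)
    let ?M = "mu_lat s V c \<mu>0 N l"
    have "total_mass ?M \<le> exp (a * (real l / real N)) * (total_mass \<mu>0 + K * (real l / real N))"
      using total_mass_mu_lat_le[OF S_meas V_meas V_marg C\<^sub>b s_mass _ K mu0, where N = N and l = l]
      by (simp add: a_def)
    also have "\<dots> \<le> exp (a * T) * (total_mass \<mu>0 + K * T)"
      using mult_left_mono[OF t a] mult_left_mono[OF t K] t K
      by (intro mult_mono add_left_mono) auto
    finally have "\<bar>L\<bar> * total_mass ?M \<le> \<bar>L\<bar> * (exp (a * T) * (total_mass \<mu>0 + K * T))"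
      by (rule mult_left_mono) simp
    with s_norm[OF mu_lat_fin_borel_measures[of s V c \<mu>0 N l]]
    show "bl_norm (s ?M) \<le> \<bar>L\<bar> * (exp (a * T) * (total_mass \<mu>0 + K * T)) + K"
      by linarith
  qed
qed

end
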